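(* For every $J\subseteq\{0,1,\dots,n-1\}$, $$\varphi(X_J)=2^{\#J}\sum_{F\in\mathcal{F}_n,\ F\subseteq J\cup(J+1)}P_F.$$
   Context: $B_n$: signed permutations $w=w_1\dots w_n$, values ordered $\cdots<-2<-1<1<2<\cdots$, $w_0=0$; $\mathrm{Des}(w)=\{i\in\{0,\dots,n-1\}:w_i>w_{i+1}\}$; $X_J=\sum_{\mathrm{Des}(w)\subseteq J}w\in\mathbb{Q}B_n$. $\varphi:\mathbb{Q}B_n\to\mathbb{Q}\mathfrak{S}_n$ is the linear extension of $w\mapsto|w_1|\dots|w_n|$. For $u\in\mathfrak{S}_n$, $\mathrm{Peak}(u)=\{i\in[n-1]:u_{i-1}<u_i>u_{i+1}\}$ with $u_0=0$; $\mathcal{F}_n$ is the set of subsets of $[n-1]$ with no two consecutive integers; $P_F=\sum_{\mathrm{Peak}(u)=F}u$. $J+1=\{j+1:j\in J\}$. *)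

theory Defs
  imports Complex_Main
begin

text \<open>Elements of the group algebras QB_n and QS_n are coefficient functions into rat.\<close>

definition signed_perms :: "nat \<Rightarrow> int list set" where
  "signed_perms n = {w. length w = n \<and> distinct (map abs w) \<and> abs ` set w = {1..int n}}"

definition perms :: "nat \<Rightarrow> nat list set" where
  "perms n = {u. length u = n \<and> distinct u \<and> set u = {1..n}}"

text \<open>w_i with the convention w_0 = 0 (1-based indexing)\<close>
definition sval :: "int list \<Rightarrow> nat \<Rightarrow> int" where
  "sval w i = (if i = 0 then 0 else w ! (i - 1))"

definition uval :: "nat list \<Rightarrow> nat \<Rightarrow> nat" where
  "uval u i = (if i = 0 then 0 else u ! (i - 1))"

definition Des :: "int list \<Rightarrow> nat set" where
  "Des w = {i. i < length w \<and> sval w i > sval w (Suc i)}"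

definition Peak :: "nat list \<Rightarrow> nat set" where
  "Peak u = {i. 1 \<le> i \<and> i \<le> length u - 1 \<and>
              uval u (i - 1) < uval u i \<and> uval u i > uval u (Suc i)}"

definition XJ :: "nat \<Rightarrow> nat set \<Rightarrow> int list \<Rightarrow> rat" where
  "XJ n J = (\<lambda>w. if w \<in> signed_perms n \<and> Des w \<subseteq> J then 1 else 0)"

text \<open>linear extension of w \<mapsto> |w_1| ... |w_n|\<close>
definition phi :: "nat \<Rightarrow> (int list \<Rightarrow> rat) \<Rightarrow> nat list \<Rightarrow> rat" where
  "phi n x = (\<lambda>u. \<Sum>w \<in> {w \<in> signed_perms n. map (nat \<circ> abs) w = u}. x w)"

definition Fn :: "nat \<Rightarrow> nat set set" where
  "Fn n = {F. F \<subseteq> {1..n - 1} \<and> (\<forall>i\<in>F. Suc i \<notin> F)}"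

definition PF :: "nat \<Rightarrow> nat set \<Rightarrow> nat list \<Rightarrow> rat" where
  "PF n F = (\<lambda>u. if u \<in> perms n \<and> Peak u = F then 1 else 0)"

end

theory Submission
  imports Defs
begin

(* The fibre of phi over u in S_n consists of the 2^n words obtained from u by negating the
   entries at a set N of positions.  For i not in J, the condition i \<notin> Des w fixes the sign
   of exactly one entry: w_(i+1) must be positive if u_i < u_(i+1) (with u_0 = 0), and w_i
   must be negative otherwise.  Two such conditions clash only if they prescribe opposite
   signs for the same entry, i.e. if i, i+1 \<notin> J and u_i < u_(i+1) > u_(i+2): a peak i+1
   of u outside J \<union> (J+1).  Otherwise the n - #J conditions concern distinct entries and
   leave 2^#J sign choices free, which is the coefficient of u on the right-hand side. *)

definition negate_at :: "nat set \<Rightarrow> nat list \<Rightarrow> int list" where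
  "negate_at N u = map (\<lambda>k. if Suc k \<in> N then - int (u ! k) else int (u ! k)) [0..<length u]"

lemma length_negate_at [simp]: "length (negate_at N u) = length u"
  by (simp add: negate_at_def)

lemma sval_negate_at:
  assumes "i \<le> length u"
  shows "sval (negate_at N u) i = (if i \<in> N then - int (uval u i) else int (uval u i))"
  using assms by (cases i) (auto simp: sval_def uval_def negate_at_def)

lemma map_abs_negate_at: "map abs (negate_at N u) = map int u"
  by (rule nth_equalityI) (auto simp: negate_at_def)

lemma map_nat_abs_negate_at: "map (nat \<circ> abs) (negate_at N u) = u"
  unfolding map_map[symmetric] map_abs_negate_at by (simp add: map_idI)

lemma perms_length: "u \<in> perms n \<Longrightarrow> length u = n"
  by (simp add: perms_def)

lemma uval_perms_ge_1:
  assumes "u \<in> perms n" "1 \<le> i" "i \<le> n"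
  shows "1 \<le> uval u i"
  using assms nth_mem[of "i - 1" u] by (auto simp: perms_def uval_def)

lemma inj_on_uval_perms: "u \<in> perms n \<Longrightarrow> inj_on (uval u) {1..n}"
  by (auto simp: inj_on_def perms_def uval_def nth_eq_iff_index_eq)

lemma negate_at_in_signed_perms:
  assumes "u \<in> perms n"
  shows "negate_at N u \<in> signed_perms n"
proof -
  have "distinct (map abs (negate_at N u))"
    using assms by (simp add: map_abs_negate_at perms_def distinct_map)
  moreover have "abs ` set (negate_at N u) = {1..int n}"
    using assms unfolding set_map[symmetric] map_abs_negate_at
    by (simp add: perms_def image_int_atLeastAtMost)
  ultimately show ?thesis
    using assms by (simp add: signed_perms_def perms_length)
qed

lemma inj_on_negate_at:
  assumes "u \<in> perms n"
  shows "inj_on (\<lambda>N. negate_at N u) (Pow {1..n})"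
proof (rule inj_onI)
  fix N N' assume "N \<in> Pow {1..n}" "N' \<in> Pow {1..n}" "negate_at N u = negate_at N' u"
  moreover have "sval (negate_at N u) i = sval (negate_at N' u) i \<Longrightarrow> i \<in> {1..n} \<Longrightarrow>
      (i \<in> N \<longleftrightarrow> i \<in> N')" for i
    using uval_perms_ge_1[OF assms, of i] perms_length[OF assms]
    by (auto simp: sval_negate_at split: if_splits)
  ultimately show "N = N'" by auto
qed

lemma map_nat_abs_in_perms:
  assumes "w \<in> signed_perms n"
  shows "map (nat \<circ> abs) w \<in> perms n"
proof -
  have abs_w: "distinct (map abs w)" "set (map abs w) = {1..int n}"
    using assms by (simp_all add: signed_perms_def)
  have "inj_on nat (set (map abs w))"
    unfolding abs_w(2) by (auto simp: inj_on_def)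
  then have "distinct (map nat (map abs w))"
    using abs_w(1) by (simp only: distinct_map)
  moreover have "set (map nat (map abs w)) = nat ` int ` {1..n}"
    unfolding set_map[of nat] abs_w(2) by (simp add: image_int_atLeastAtMost)
  ultimately show ?thesis
    using assms by (simp add: perms_def signed_perms_def image_image)
qed

lemma negate_at_negative_entries:
  assumes "w \<in> signed_perms n"
  shows "w = negate_at {i \<in> {1..n}. sval w i < 0} (map (nat \<circ> abs) w)"
  using assms by (intro nth_equalityI) (auto simp: signed_perms_def negate_at_def sval_def)

lemma bij_betw_negate_at_fibre:
  assumes "u \<in> perms n"
  shows "bij_betw (\<lambda>N. negate_at N u) (Pow {1..n})
           {w \<in> signed_perms n. map (nat \<circ> abs) w = u}"
proof -
  have "{w \<in> signed_perms n. map (nat \<circ> abs) w = u} \<subseteq> (\<lambda>N. negate_at N u) ` Pow {1..n}"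
    using negate_at_negative_entries by blast
  then show ?thesis
    using inj_on_negate_at[OF assms] negate_at_in_signed_perms[OF assms]
    by (auto simp: bij_betw_def map_nat_abs_negate_at)
qed

lemma phi_eq_sum_negate_at:
  assumes "u \<in> perms n"
  shows "phi n x u = (\<Sum>N \<in> Pow {1..n}. x (negate_at N u))"
  unfolding phi_def by (rule sum.reindex_bij_betw[OF bij_betw_negate_at_fibre[OF assms], symmetric])

lemma phi_outside_perms:
  assumes "u \<notin> perms n"
  shows "phi n x u = 0"
proof -
  have fibre: "{w \<in> signed_perms n. map (nat \<circ> abs) w = u} = {}"
    using assms map_nat_abs_in_perms by blast
  show ?thesis
    unfolding phi_def fibre by simp
qed

definition ascent :: "nat list \<Rightarrow> nat \<Rightarrow> bool" where
  "ascent u i \<longleftrightarrow> uval u i < uval u (Suc i)"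

lemma ascent_0: "u \<in> perms n \<Longrightarrow> 0 < n \<Longrightarrow> ascent u 0"
  using uval_perms_ge_1[of u n 1] by (simp add: ascent_def uval_def)

lemma Des_negate_at_iff:
  assumes u: "u \<in> perms n" and i: "i < n"
  shows "i \<in> Des (negate_at N u) \<longleftrightarrow> (if ascent u i then Suc i \<in> N else i \<notin> N)"
proof -
  have pos: "1 \<le> uval u (Suc i)"
    using uval_perms_ge_1[OF u] i by simp
  have ne: "uval u i \<noteq> uval u (Suc i)"
    using inj_onD[OF inj_on_uval_perms[OF u], of i "Suc i"] pos i by (cases i) (auto simp: uval_def)
  have "i \<in> Des (negate_at N u) \<longleftrightarrow> sval (negate_at N u) (Suc i) < sval (negate_at N u) i"
    using u i by (simp add: Des_def perms_length)
  also have "\<dots> \<longleftrightarrow> (if ascent u i then Suc i \<in> N else i \<notin> N)"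
    using u i pos ne by (auto simp: sval_negate_at perms_length ascent_def)
  finally show ?thesis .
qed

lemma Suc_in_Peak_iff:
  assumes "u \<in> perms n"
  shows "Suc i \<in> Peak u \<longleftrightarrow> Suc i < n \<and> ascent u i \<and> \<not> ascent u (Suc i)"
proof -
  have "uval u (Suc i) \<noteq> uval u (Suc (Suc i))" if "Suc i < n"
    using inj_onD[OF inj_on_uval_perms[OF assms], of "Suc i" "Suc (Suc i)"] that by auto
  then show ?thesis
    using assms by (auto simp: Peak_def ascent_def perms_length linorder_neq_iff)
qed

lemma zero_notin_Peak: "0 \<notin> Peak u"
  by (simp add: Peak_def)

lemma Peak_subset_iff:
  assumes "u \<in> perms n"
  shows "Peak u \<subseteq> J \<union> Suc ` J \<longleftrightarrow>
    (\<forall>i. Suc i < n \<and> ascent u i \<and> \<not> ascent u (Suc i) \<longrightarrow> i \<in> J \<or> Suc i \<in> J)"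
proof -
  have "Peak u = Suc ` {i. Suc i < n \<and> ascent u i \<and> \<not> ascent u (Suc i)}"
  proof (intro equalityI subsetI)
    fix j assume "j \<in> Peak u"
    moreover obtain i where "j = Suc i"
      using \<open>j \<in> Peak u\<close> zero_notin_Peak not0_implies_Suc by metis
    ultimately show "j \<in> Suc ` {i. Suc i < n \<and> ascent u i \<and> \<not> ascent u (Suc i)}"
      using Suc_in_Peak_iff[OF assms] by blast
  qed (use Suc_in_Peak_iff[OF assms] in auto)
  then show ?thesis by auto
qed

lemma card_sets_between:
  assumes "finite A" "P \<subseteq> A" "Q \<subseteq> A"
  shows "card {N. P \<subseteq> N \<and> N \<subseteq> A - Q} =
    (if P \<inter> Q = {} then 2 ^ (card A - card P - card Q) else 0)"
proof (cases "P \<inter> Q = {}")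
  case True
  have "{N. P \<subseteq> N \<and> N \<subseteq> A - Q} = (\<lambda>M. M \<union> P) ` Pow (A - (P \<union> Q))"
  proof (intro equalityI subsetI)
    fix N assume "N \<in> {N. P \<subseteq> N \<and> N \<subseteq> A - Q}"
    then have "N = (N - P) \<union> P" "N - P \<in> Pow (A - (P \<union> Q))" by auto
    then show "N \<in> (\<lambda>M. M \<union> P) ` Pow (A - (P \<union> Q))" by blast
  next
    fix N assume "N \<in> (\<lambda>M. M \<union> P) ` Pow (A - (P \<union> Q))"
    then obtain M where "N = M \<union> P" "M \<subseteq> A - (P \<union> Q)" by blast
    then show "N \<in> {N. P \<subseteq> N \<and> N \<subseteq> A - Q}"
      using True assms by blast
  qed
  moreover have "inj_on (\<lambda>M. M \<union> P) (Pow (A - (P \<union> Q)))"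
    by (rule inj_onI) auto
  moreover have "card (A - (P \<union> Q)) = card A - card P - card Q"
    using True assms by (simp add: card_Diff_subset card_Un_disjoint finite_subset)
  ultimately show ?thesis
    using True assms by (simp add: card_image card_Pow)
next
  case False
  then have empty: "{N. P \<subseteq> N \<and> N \<subseteq> A - Q} = {}" by blast
  show ?thesis
    unfolding empty using False by simp
qed

lemma card_Des_negate_at_subset:
  assumes u: "u \<in> perms n" and J: "J \<subseteq> {0..<n}"
  shows "card {N \<in> Pow {1..n}. Des (negate_at N u) \<subseteq> J} =
    (if Peak u \<subseteq> J \<union> Suc ` J then 2 ^ card J else 0)"
proof -
  define Asc where "Asc = {i. i < n \<and> i \<notin> J \<and> ascent u i}"
  define Dsc where "Dsc = {i. i < n \<and> i \<notin> J \<and> \<not> ascent u i}"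
  have Dsc_range: "Dsc \<subseteq> {1..n}"
    using ascent_0[OF u] by (auto simp: Dsc_def Suc_le_eq intro: Nat.gr0I)
  have Asc_range: "Suc ` Asc \<subseteq> {1..n}"
    by (auto simp: Asc_def)
  have "Des (negate_at N u) \<subseteq> J \<longleftrightarrow> Dsc \<subseteq> N \<and> N \<inter> Suc ` Asc = {}" for N
  proof -
    have "Des (negate_at N u) \<subseteq> {0..<n}"
      using u by (auto simp: Des_def perms_length)
    then have "Des (negate_at N u) \<subseteq> J \<longleftrightarrow> (\<forall>i<n. i \<notin> J \<longrightarrow> i \<notin> Des (negate_at N u))"
      by (auto simp: subset_iff)
    also have "\<dots> \<longleftrightarrow> Dsc \<subseteq> N \<and> N \<inter> Suc ` Asc = {}"
      using Des_negate_at_iff[OF u] by (auto simp: Asc_def Dsc_def)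
    finally show ?thesis .
  qed
  then have fibre: "{N \<in> Pow {1..n}. Des (negate_at N u) \<subseteq> J} =
      {N. Dsc \<subseteq> N \<and> N \<subseteq> {1..n} - Suc ` Asc}"
    by auto
  have conflict: "Dsc \<inter> Suc ` Asc = {} \<longleftrightarrow> Peak u \<subseteq> J \<union> Suc ` J"
    unfolding Peak_subset_iff[OF u] by (auto simp: Asc_def Dsc_def)
  have partition: "{0..<n} - J = Dsc \<union> Asc"
    by (auto simp: Asc_def Dsc_def)
  have "card Dsc + card Asc = card ({0..<n} - J)"
    unfolding partition by (rule card_Un_disjoint[symmetric]) (auto simp: Asc_def Dsc_def)
  also have "\<dots> = n - card J"
    using J by (simp add: card_Diff_subset finite_subset)
  finally have "n - card Dsc - card (Suc ` Asc) = card J"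
    using J card_mono[OF _ J] by (simp add: card_image)
  moreover have "card {N. Dsc \<subseteq> N \<and> N \<subseteq> {1..n} - Suc ` Asc} =
      (if Dsc \<inter> Suc ` Asc = {} then 2 ^ (card {1..n} - card Dsc - card (Suc ` Asc)) else 0)"
    using Dsc_range Asc_range by (intro card_sets_between) auto
  ultimately show ?thesis
    unfolding fibre conflict by simp
qed

lemma Peak_in_Fn: "u \<in> perms n \<Longrightarrow> Peak u \<in> Fn n"
  by (auto simp: Fn_def Peak_def perms_def)

lemma sum_PF_eq:
  assumes "u \<in> perms n" "\<F> \<subseteq> Fn n"
  shows "(\<Sum>F \<in> \<F>. PF n F u) = (if Peak u \<in> \<F> then 1 else 0)"
proof -
  have "\<F> \<subseteq> Pow {1..n - 1}"
    using assms(2) by (auto simp: Fn_def)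
  then have "finite \<F>"
    by (rule finite_subset) simp
  then show ?thesis
    using assms(1) by (simp add: PF_def eq_commute[of _ "Peak u"])
qed

theorem proposition3p3:
  fixes n :: nat and J :: "nat set"
  assumes "J \<subseteq> {0..<n}"
  shows "phi n (XJ n J) =
    (\<lambda>u. 2 ^ card J * (\<Sum>F \<in> {F \<in> Fn n. F \<subseteq> J \<union> Suc ` J}. PF n F u))"
proof
  fix u
  show "phi n (XJ n J) u = 2 ^ card J * (\<Sum>F \<in> {F \<in> Fn n. F \<subseteq> J \<union> Suc ` J}. PF n F u)"
  proof (cases "u \<in> perms n")
    case True
    have "phi n (XJ n J) u = (\<Sum>N \<in> Pow {1..n}. of_bool (Des (negate_at N u) \<subseteq> J))"
      using True by (simp add: phi_eq_sum_negate_at XJ_def negate_at_in_signed_perms of_bool_def)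
    also have "\<dots> = of_nat (card {N \<in> Pow {1..n}. Des (negate_at N u) \<subseteq> J})"
      by (simp add: Int_def)
    also have "\<dots> = (if Peak u \<subseteq> J \<union> Suc ` J then 2 ^ card J else 0)"
      using card_Des_negate_at_subset[OF True assms] by simp
    finally show ?thesis
      using True by (simp add: sum_PF_eq Peak_in_Fn)
  qed (simp add: phi_outside_perms PF_def)
qed

end
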